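(* Let $C_N$ be the undirected cycle on $N$ vertices, $r>0$ and $\delta\in[0,1]$, and consider the mixed $\delta$-updating process starting with a single mutant. Define $F_k:=rk+(N-k)$ and $$\gamma_k=\begin{cases}\dfrac{(1-\delta)/F_k+\delta/N}{(1-\delta)r/F_k+2r\delta/((1+r)N)}&\text{if }k=1,\\[8pt]\dfrac{(1-\delta)/F_k+2\delta/((1+r)N)}{(1-\delta)r/F_k+\delta/N}&\text{if }k=N-1,\\[8pt]\dfrac{(1-\delta)/F_k+2\delta/((1+r)N)}{(1-\delta)r/F_k+2r\delta/((1+r)N)}&\text{otherwise}.\end{cases}$$ Then $$\mathsf{fp}_r^\delta(C_N)=\frac{1}{1+\sum_{j=1}^{N-1}\prod_{k=1}^{j}\gamma_k}.$$
   Context: Mixed $\delta$-updating on an undirected unweighted graph $G=(V,E)$ with $N$ vertices: each vertex holds a mutant (fitness $r$) or wild-type (fitness $1$); $f_S(u)$ is the fitness at $u$ when $S$ is the mutant set. At each step, with probability $\delta$ a death-Birth step: choose $v$ uniformly to die, choose a neighbor $u$ of $v$ with probability proportional to $f_S(u)$, $u$ copies its type onto $v$; with probability $1-\delta$ a Birth-death step: choose $u$ with probability proportional to $f_S(u)$ among all vertices, choose a uniformly random neighbor $v$ of $u$, $u$ copies its type onto $v$. $\mathsf{fp}_r^\delta(G)=\frac1N\sum_{u\in V}\mathsf{fp}_r^\delta(G,\{u\})$, where $\mathsf{fp}_r^\delta(G,S_0)$ is the probability all vertices eventually become mutant from mutant set $S_0$ (on the cycle this is the same for every single starting vertex). *)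

theory Defs
  imports Complex_Main
begin

text \<open>Graphs: vertex set V (finite set of nats), symmetric irreflexive adjacency E.
  Mutant set S. Fitness: r for mutants, 1 for wild types.\<close>

definition fit :: "real \<Rightarrow> nat set \<Rightarrow> nat \<Rightarrow> real" where
  "fit r S u = (if u \<in> S then r else 1)"

definition nbrs :: "nat set \<Rightarrow> (nat \<Rightarrow> nat \<Rightarrow> bool) \<Rightarrow> nat \<Rightarrow> nat set" where
  "nbrs V E v = {u \<in> V. E v u}"

definition upd :: "nat set \<Rightarrow> nat \<Rightarrow> nat \<Rightarrow> nat set" where
  "upd S v u = (if u \<in> S then insert v S else S - {v})"

text \<open>hitp V E r d n S = probability that the mixed d-updating process started
  from mutant set S is in the all-mutant state V after n steps
  (first-step decomposition of the n-step transition probability).\<close>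
primrec hitp :: "nat set \<Rightarrow> (nat \<Rightarrow> nat \<Rightarrow> bool) \<Rightarrow> real \<Rightarrow> real \<Rightarrow> nat \<Rightarrow> nat set \<Rightarrow> real" where
  "hitp V E r d 0 S = (if S = V then 1 else 0)"
| "hitp V E r d (Suc n) S =
     d * (\<Sum>v\<in>V. (1 / real (card V)) *
            (\<Sum>u\<in>nbrs V E v. fit r S u / (\<Sum>w\<in>nbrs V E v. fit r S w)
                                 * hitp V E r d n (upd S v u)))
   + (1 - d) * (\<Sum>u\<in>V. fit r S u / (\<Sum>w\<in>V. fit r S w) *
            (\<Sum>v\<in>nbrs V E u. (1 / real (card (nbrs V E u)))
                                 * hitp V E r d n (upd S v u)))"

text \<open>Fixation probability from S0: probability of eventually reaching the
  (absorbing) all-mutant state = limit of the n-step probabilities.\<close>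
definition fp_from :: "nat set \<Rightarrow> (nat \<Rightarrow> nat \<Rightarrow> bool) \<Rightarrow> real \<Rightarrow> real \<Rightarrow> nat set \<Rightarrow> real" where
  "fp_from V E r d S0 = lim (\<lambda>n. hitp V E r d n S0)"

definition fp :: "nat set \<Rightarrow> (nat \<Rightarrow> nat \<Rightarrow> bool) \<Rightarrow> real \<Rightarrow> real \<Rightarrow> real" where
  "fp V E r d = (1 / real (card V)) * (\<Sum>u\<in>V. fp_from V E r d {u})"

definition cycle_adj :: "nat \<Rightarrow> nat \<Rightarrow> nat \<Rightarrow> bool" where
  "cycle_adj N u v = (v = (u + 1) mod N \<or> u = (v + 1) mod N)"

definition Fk :: "nat \<Rightarrow> real \<Rightarrow> nat \<Rightarrow> real" where
  "Fk N r k = r * real k + (real N - real k)"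

definition gamma :: "nat \<Rightarrow> real \<Rightarrow> real \<Rightarrow> nat \<Rightarrow> real" where
  "gamma N r d k =
    (if k = 1 then
       ((1 - d) / Fk N r k + d / real N) /
       ((1 - d) * r / Fk N r k + 2 * r * d / ((1 + r) * real N))
     else if k = N - 1 then
       ((1 - d) / Fk N r k + 2 * d / ((1 + r) * real N)) /
       ((1 - d) * r / Fk N r k + d / real N)
     else
       ((1 - d) / Fk N r k + 2 * d / ((1 + r) * real N)) /
       ((1 - d) * r / Fk N r k + 2 * r * d / ((1 + r) * real N)))"

end

theory Submission
  imports Defs
begin

text \<open>
  Started from a single mutant, the mutants on the cycle always form an arc, and since rotations
  are automorphisms of the cycle, the probability of fixation within n steps from an arc depends
  only on its length k. In one step only the two edges at the ends of the arc can change the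
  state, so the arc length performs a birth-death chain on 0..N whose up and down probabilities
  are sums of two copying probabilities each; their ratio is gamma k. The hitting probabilities
  increase to a limit that satisfies the balance equations of this chain, and solving them as
  in gambler's ruin gives the fixation probability.
\<close>

section \<open>Birth-death chains\<close>

primrec bd_absorb :: "(nat \<Rightarrow> real) \<Rightarrow> (nat \<Rightarrow> real) \<Rightarrow> nat \<Rightarrow> nat \<Rightarrow> nat \<Rightarrow> real" where
  "bd_absorb p q N 0 k = (if k = N then 1 else 0)"
| "bd_absorb p q N (Suc n) k =
     (if k = 0 then 0 else if k = N then 1 else
        p k * bd_absorb p q N n (k + 1) + q k * bd_absorb p q N n (k - 1)
        + (1 - p k - q k) * bd_absorb p q N n k)"

lemma bd_absorb_at_0 [simp]: "0 < N \<Longrightarrow> bd_absorb p q N n 0 = 0"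
  by (cases n) auto

lemma bd_absorb_at_top [simp]: "0 < N \<Longrightarrow> bd_absorb p q N n N = 1"
  by (cases n) auto

lemma bd_absorb_Suc_interior:
  "0 < k \<Longrightarrow> k \<noteq> N \<Longrightarrow> bd_absorb p q N (Suc n) k =
     p k * bd_absorb p q N n (k + 1) + q k * bd_absorb p q N n (k - 1)
     + (1 - p k - q k) * bd_absorb p q N n k"
  by simp

declare bd_absorb.simps(2) [simp del]

lemma convex_comb_mono:
  fixes a b c a' b' c' p q :: real
  assumes "0 \<le> p" "0 \<le> q" "p + q \<le> 1" "a \<le> a'" "b \<le> b'" "c \<le> c'"
  shows "p * a + q * b + (1 - p - q) * c \<le> p * a' + q * b' + (1 - p - q) * c'"
  using assms by (intro add_mono mult_left_mono) auto

lemma bd_absorb_bounds: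
  assumes prob: "\<And>k. 0 < k \<Longrightarrow> k < N \<Longrightarrow> 0 \<le> p k \<and> 0 \<le> q k \<and> p k + q k \<le> 1"
    and "k \<le> N"
  shows "0 \<le> bd_absorb p q N n k \<and> bd_absorb p q N n k \<le> 1"
  using \<open>k \<le> N\<close>
proof (induction n arbitrary: k)
  case (Suc n)
  consider "k = 0" | "k = N" | "0 < k" "k < N" using Suc.prems by linarith
  then show ?case
  proof cases
    case 3
    have lo: "0 \<le> bd_absorb p q N n (k + 1)" "0 \<le> bd_absorb p q N n (k - 1)"
        "0 \<le> bd_absorb p q N n k"
      and hi: "bd_absorb p q N n (k + 1) \<le> 1" "bd_absorb p q N n (k - 1) \<le> 1"
        "bd_absorb p q N n k \<le> 1"
      using Suc.IH[of "k + 1"] Suc.IH[of "k - 1"] Suc.IH[of k] 3 by auto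
    have pq: "0 \<le> p k" "0 \<le> q k" "p k + q k \<le> 1" using prob[OF 3] by auto
    show ?thesis
      using convex_comb_mono[OF pq lo] convex_comb_mono[OF pq hi] 3
      by (simp add: bd_absorb_Suc_interior)
  qed (simp_all add: bd_absorb.simps)
qed simp

lemma bd_absorb_Suc_ge:
  assumes "0 < N" and prob: "\<And>k. 0 < k \<Longrightarrow> k < N \<Longrightarrow> 0 \<le> p k \<and> 0 \<le> q k \<and> p k + q k \<le> 1"
    and "k \<le> N"
  shows "bd_absorb p q N n k \<le> bd_absorb p q N (Suc n) k"
  using \<open>k \<le> N\<close>
proof (induction n arbitrary: k)
  case 0
  from bd_absorb_bounds[OF prob this, where n = "Suc 0"] \<open>0 < N\<close> show ?case
    by simp
next
  case (Suc n)
  consider "k = 0" | "k = N" | "0 < k" "k < N" using Suc.prems by linarith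
  then show ?case
  proof cases
    case 3
    have pq: "0 \<le> p k" "0 \<le> q k" "p k + q k \<le> 1" using prob[OF 3] by auto
    have "bd_absorb p q N n (k + 1) \<le> bd_absorb p q N (Suc n) (k + 1)"
      "bd_absorb p q N n (k - 1) \<le> bd_absorb p q N (Suc n) (k - 1)"
      "bd_absorb p q N n k \<le> bd_absorb p q N (Suc n) k"
      using Suc.IH[of "k + 1"] Suc.IH[of "k - 1"] Suc.IH[of k] 3 by auto
    from convex_comb_mono[OF pq this] 3 show ?thesis
      by (simp only: bd_absorb_Suc_interior)
  qed (simp_all add: bd_absorb.simps)
qed

lemma bd_absorb_convergent:
  assumes "0 < N" and prob: "\<And>k. 0 < k \<Longrightarrow> k < N \<Longrightarrow> 0 \<le> p k \<and> 0 \<le> q k \<and> p k + q k \<le> 1"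
    and "k \<le> N"
  shows "convergent (\<lambda>n. bd_absorb p q N n k)"
proof (rule Bseq_mono_convergent)
  show "Bseq (\<lambda>n. bd_absorb p q N n k)"
    using bd_absorb_bounds[OF prob \<open>k \<le> N\<close>] by (intro BseqI'[of _ 1]) auto
  show "\<forall>m n. m \<le> n \<longrightarrow> bd_absorb p q N m k \<le> bd_absorb p q N n k"
    using incseq_SucI[of "\<lambda>n. bd_absorb p q N n k", OF bd_absorb_Suc_ge[OF assms]]
    by (auto simp: incseq_def)
qed

lemma gamblers_ruin_formula:
  fixes L p q :: "nat \<Rightarrow> real"
  assumes "L 0 = 0" "L N = 1"
    and p_nz: "\<And>k. 0 < k \<Longrightarrow> k < N \<Longrightarrow> p k \<noteq> 0"
    and balance: "\<And>k. 0 < k \<Longrightarrow> k < N \<Longrightarrow> p k * (L (k + 1) - L k) = q k * (L k - L (k - 1))"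
  shows "L 1 = 1 / (1 + (\<Sum>j = 1..N - 1. \<Prod>k = 1..j. q k / p k))"
proof -
  define P where "P j = (\<Prod>k = 1..j. q k / p k)" for j
  have N: "N = Suc (N - 1)" using assms(1,2) by (cases N) auto
  have incr: "L (Suc j) - L j = L 1 * P j" if "j < N" for j
    using that
  proof (induction j)
    case (Suc j)
    have "L (Suc (Suc j)) - L (Suc j) = q (Suc j) / p (Suc j) * (L (Suc j) - L j)"
      using balance[of "Suc j"] p_nz[of "Suc j"] Suc.prems by (simp add: field_simps)
    then show ?case using Suc by (simp add: P_def)
  qed (simp add: P_def \<open>L 0 = 0\<close>)
  have "1 = (\<Sum>j<N. L (Suc j) - L j)"
    by (simp add: sum_lessThan_telescope assms(1,2))
  also have "\<dots> = (\<Sum>j<N. L 1 * P j)"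
    using incr by simp
  also have "\<dots> = L 1 * P 0 + (\<Sum>j<N - 1. L 1 * P (Suc j))"
    by (subst N) (simp only: sum.lessThan_Suc_shift diff_Suc_1)
  also have "\<dots> = L 1 * (1 + (\<Sum>j = 1..N - 1. P j))"
  proof -
    have "(\<Sum>j = 1..N - 1. P j) = (\<Sum>j<N - 1. P (Suc j))"
      by (simp only: One_nat_def sum.atLeast1_atMost_eq)
    moreover have "P 0 = 1" by (simp add: P_def)
    ultimately show ?thesis by (simp add: sum_distrib_left distrib_left)
  qed
  finally have sum_eq: "L 1 * (1 + (\<Sum>j = 1..N - 1. P j)) = 1" ..
  then have "1 + (\<Sum>j = 1..N - 1. P j) \<noteq> 0" by auto
  with sum_eq show ?thesis
    unfolding P_def by (simp add: eq_divide_eq)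
qed

lemma bd_absorb_tendsto:
  assumes "1 \<le> N"
    and prob: "\<And>k. 0 < k \<Longrightarrow> k < N \<Longrightarrow> 0 < p k \<and> 0 \<le> q k \<and> p k + q k \<le> 1"
  shows "(\<lambda>n. bd_absorb p q N n 1) \<longlonglongrightarrow> 1 / (1 + (\<Sum>j = 1..N - 1. \<Prod>k = 1..j. q k / p k))"
proof -
  define L where "L k = lim (\<lambda>n. bd_absorb p q N n k)" for k
  have prob': "0 \<le> p k \<and> 0 \<le> q k \<and> p k + q k \<le> 1" if "0 < k" "k < N" for k
    using prob[OF that] by auto
  have conv: "(\<lambda>n. bd_absorb p q N n k) \<longlonglongrightarrow> L k" if "k \<le> N" for k
    unfolding L_def using bd_absorb_convergent[OF _ prob' that] \<open>1 \<le> N\<close>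
    by (simp add: convergent_LIMSEQ_iff)
  have balance: "p k * (L (k + 1) - L k) = q k * (L k - L (k - 1))" if k: "0 < k" "k < N" for k
  proof -
    have "bd_absorb p q N (Suc n) k = p k * bd_absorb p q N n (k + 1)
        + q k * bd_absorb p q N n (k - 1) + (1 - p k - q k) * bd_absorb p q N n k" for n
      using k by (simp add: bd_absorb_Suc_interior)
    moreover have "(\<lambda>n. p k * bd_absorb p q N n (k + 1) + q k * bd_absorb p q N n (k - 1)
        + (1 - p k - q k) * bd_absorb p q N n k)
        \<longlonglongrightarrow> p k * L (k + 1) + q k * L (k - 1) + (1 - p k - q k) * L k"
      using k by (intro tendsto_intros conv) auto
    ultimately have "(\<lambda>n. bd_absorb p q N (Suc n) k)
        \<longlonglongrightarrow> p k * L (k + 1) + q k * L (k - 1) + (1 - p k - q k) * L k"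
      by simp
    moreover have "(\<lambda>n. bd_absorb p q N (Suc n) k) \<longlonglongrightarrow> L k"
      using LIMSEQ_Suc[OF conv[of k]] k by simp
    ultimately have "L k = p k * L (k + 1) + q k * L (k - 1) + (1 - p k - q k) * L k"
      using LIMSEQ_unique by blast
    then show ?thesis by (simp add: algebra_simps)
  qed
  have "L 0 = 0" "L N = 1" unfolding L_def using \<open>1 \<le> N\<close> by simp_all
  have "L 1 = 1 / (1 + (\<Sum>j = 1..N - 1. \<Prod>k = 1..j. q k / p k))"
  proof (rule gamblers_ruin_formula)
    show "p k \<noteq> 0" if "0 < k" "k < N" for k using prob[OF that] by simp
  qed fact+
  then show ?thesis using conv[OF \<open>1 \<le> N\<close>] by simp
qed

section \<open>The mixed updating process on a graph\<close>

definition copy_prob ::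
    "nat set \<Rightarrow> (nat \<Rightarrow> nat \<Rightarrow> bool) \<Rightarrow> real \<Rightarrow> real \<Rightarrow> nat set \<Rightarrow> nat \<Rightarrow> nat \<Rightarrow> real"
  where "copy_prob V E r d S v u =
    d / real (card V) * (fit r S u / (\<Sum>w\<in>nbrs V E v. fit r S w))
    + (1 - d) * (fit r S u / (\<Sum>w\<in>V. fit r S w)) / real (card (nbrs V E u))"

lemma nbrs_subset: "nbrs V E v \<subseteq> V"
  by (auto simp: nbrs_def)

lemma nbrs_sym: "symp_on V E \<Longrightarrow> v \<in> V \<Longrightarrow> u \<in> nbrs V E v \<Longrightarrow> v \<in> nbrs V E u"
  by (auto simp: nbrs_def symp_on_def)

lemma sum_nbrs_swap:
  assumes "finite V" "symp_on V E"
  shows "(\<Sum>u\<in>V. \<Sum>v\<in>nbrs V E u. f u v) = (\<Sum>v\<in>V. \<Sum>u\<in>nbrs V E v. f u v)"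
proof -
  have "(\<Sum>u\<in>V. \<Sum>v\<in>nbrs V E u. f u v) = (\<Sum>v\<in>V. \<Sum>u\<in>{u \<in> V. E u v}. f u v)"
    unfolding nbrs_def using sum.swap_restrict[OF assms(1) assms(1)] by simp
  also have "\<dots> = (\<Sum>v\<in>V. \<Sum>u\<in>nbrs V E v. f u v)"
    using assms(2) by (intro sum.cong refl) (auto simp: nbrs_def symp_on_def)
  finally show ?thesis .
qed

lemma fit_pos: "0 < r \<Longrightarrow> 0 < fit r S u"
  by (simp add: fit_def)

lemma hitp_Suc_copy_prob:
  assumes "finite V" "symp_on V E"
  shows "hitp V E r d (Suc n) S =
    (\<Sum>v\<in>V. \<Sum>u\<in>nbrs V E v. copy_prob V E r d S v u * hitp V E r d n (upd S v u))"
proof -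
  let ?H = "hitp V E r d n" and ?f = "fit r S"
  have "(\<Sum>u\<in>V. ?f u / sum ?f V * (\<Sum>v\<in>nbrs V E u. 1 / real (card (nbrs V E u)) * ?H (upd S v u)))
      = (\<Sum>u\<in>V. \<Sum>v\<in>nbrs V E u. ?f u / sum ?f V / real (card (nbrs V E u)) * ?H (upd S v u))"
    by (simp add: sum_distrib_left)
  also have "\<dots> = (\<Sum>v\<in>V. \<Sum>u\<in>nbrs V E v. ?f u / sum ?f V / real (card (nbrs V E u)) * ?H (upd S v u))"
    by (rule sum_nbrs_swap[OF assms])
  finally show ?thesis
    by (simp add: copy_prob_def sum_distrib_left sum.distrib[symmetric] algebra_simps)
qed

declare hitp.simps(2) [simp del]

lemma copy_prob_sum:
  assumes "finite V" "V \<noteq> {}" "symp_on V E" "\<And>v. v \<in> V \<Longrightarrow> nbrs V E v \<noteq> {}" "0 < r"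
  shows "(\<Sum>v\<in>V. \<Sum>u\<in>nbrs V E v. copy_prob V E r d S v u) = 1"
proof -
  let ?f = "fit r S"
  have fin: "finite (nbrs V E v)" for v
    using assms(1) nbrs_subset finite_subset by metis
  have pos: "0 < sum ?f A" if "finite A" "A \<noteq> {}" for A
    using that by (intro sum_pos) (simp_all add: fit_pos assms(5))
  have death_birth: "(\<Sum>u\<in>nbrs V E v. ?f u / sum ?f (nbrs V E v)) = 1" if "v \<in> V" for v
    using pos[OF fin assms(4)[OF that]] by (simp add: sum_divide_distrib[symmetric])
  have birth_death: "(\<Sum>v\<in>V. \<Sum>u\<in>nbrs V E v. ?f u / sum ?f V / real (card (nbrs V E u))) = 1"
  proof -
    have "(\<Sum>v\<in>V. \<Sum>u\<in>nbrs V E v. ?f u / sum ?f V / real (card (nbrs V E u)))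
        = (\<Sum>u\<in>V. \<Sum>v\<in>nbrs V E u. ?f u / sum ?f V / real (card (nbrs V E u)))"
      by (rule sum_nbrs_swap[OF assms(1,3), symmetric])
    also have "\<dots> = (\<Sum>u\<in>V. ?f u / sum ?f V)"
      using fin assms(4) by (intro sum.cong refl) (simp add: card_gt_0_iff)
    also have "\<dots> = 1"
      using pos[OF assms(1,2)] by (simp add: sum_divide_distrib[symmetric])
    finally show ?thesis .
  qed
  have "(\<Sum>v\<in>V. \<Sum>u\<in>nbrs V E v. copy_prob V E r d S v u)
      = d / real (card V) * (\<Sum>v\<in>V. \<Sum>u\<in>nbrs V E v. ?f u / sum ?f (nbrs V E v))
        + (1 - d) * (\<Sum>v\<in>V. \<Sum>u\<in>nbrs V E v. ?f u / sum ?f V / real (card (nbrs V E u)))"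
    by (simp add: copy_prob_def sum.distrib sum_distrib_left mult.assoc)
  also have "\<dots> = 1"
    using death_birth birth_death assms(1,2) by simp
  finally show ?thesis .
qed

lemma convex_comb_pos:
  fixes x y d :: real
  assumes "0 < x" "0 < y" "0 \<le> d" "d \<le> 1"
  shows "0 < d * x + (1 - d) * y"
proof (cases "d = 1")
  case False
  then have "0 < (1 - d) * y" using assms by simp
  moreover have "0 \<le> d * x" using assms by simp
  ultimately show ?thesis by linarith
qed (use assms in simp)

lemma copy_prob_pos:
  assumes "finite V" "symp_on V E" "0 < r" "0 \<le> d" "d \<le> 1" "v \<in> V" "u \<in> nbrs V E v"
  shows "0 < copy_prob V E r d S v u"
proof -
  let ?f = "fit r S"
  have fin: "finite (nbrs V E x)" for x
    using assms(1) nbrs_subset finite_subset by metis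
  have u: "u \<in> V" using assms(7) nbrs_subset by blast
  have "0 < sum ?f (nbrs V E v)" "0 < sum ?f V"
    using assms(1,3,6,7) fin by (auto intro!: sum_pos simp: fit_pos)
  moreover have "0 < card (nbrs V E u)"
    using nbrs_sym[OF assms(2,6,7)] fin card_gt_0_iff by blast
  moreover have "0 < card V" using assms(1,6) card_gt_0_iff by blast
  ultimately have "0 < ?f u / real (card V) / sum ?f (nbrs V E v)"
    "0 < ?f u / sum ?f V / real (card (nbrs V E u))"
    using fit_pos[OF assms(3)] by simp_all
  from convex_comb_pos[OF this assms(4,5)] show ?thesis
    by (simp add: copy_prob_def)
qed

definition graph_automorphism :: "nat set \<Rightarrow> (nat \<Rightarrow> nat \<Rightarrow> bool) \<Rightarrow> (nat \<Rightarrow> nat) \<Rightarrow> bool"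
  where "graph_automorphism V E \<sigma> \<longleftrightarrow> bij_betw \<sigma> V V \<and> (\<forall>u\<in>V. \<forall>v\<in>V. E (\<sigma> u) (\<sigma> v) = E u v)"

lemma nbrs_automorphism:
  assumes "graph_automorphism V E \<sigma>" "v \<in> V"
  shows "nbrs V E (\<sigma> v) = \<sigma> ` nbrs V E v"
proof
  show "\<sigma> ` nbrs V E v \<subseteq> nbrs V E (\<sigma> v)"
    using assms by (auto simp: nbrs_def graph_automorphism_def bij_betw_def)
  show "nbrs V E (\<sigma> v) \<subseteq> \<sigma> ` nbrs V E v"
  proof
    fix u assume "u \<in> nbrs V E (\<sigma> v)"
    then have "u \<in> V" "E (\<sigma> v) u" by (auto simp: nbrs_def)
    moreover have "u \<in> \<sigma> ` V"
      using \<open>u \<in> V\<close> assms(1) by (simp add: graph_automorphism_def bij_betw_def)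
    then obtain w where "w \<in> V" "u = \<sigma> w" by blast
    ultimately show "u \<in> \<sigma> ` nbrs V E v"
      using assms by (auto simp: nbrs_def graph_automorphism_def)
  qed
qed

lemma fit_image: "inj_on \<sigma> V \<Longrightarrow> S \<subseteq> V \<Longrightarrow> x \<in> V \<Longrightarrow> fit r (\<sigma> ` S) (\<sigma> x) = fit r S x"
  by (simp add: fit_def inj_on_image_mem_iff)

lemma upd_image:
  assumes "inj_on \<sigma> V" "S \<subseteq> V" "v \<in> V" "u \<in> V"
  shows "upd (\<sigma> ` S) (\<sigma> v) (\<sigma> u) = \<sigma> ` upd S v u"
proof -
  have "\<sigma> ` (S - {v}) = \<sigma> ` S - {\<sigma> v}"
    using inj_on_image_set_diff[OF assms(1), of S "{v}"] assms by auto
  then show ?thesis using assms by (simp add: upd_def inj_on_image_mem_iff)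
qed

lemma copy_prob_automorphism:
  assumes aut: "graph_automorphism V E \<sigma>" and S: "S \<subseteq> V" and "v \<in> V" "u \<in> V"
  shows "copy_prob V E r d (\<sigma> ` S) (\<sigma> v) (\<sigma> u) = copy_prob V E r d S v u"
proof -
  have bij: "bij_betw \<sigma> V V" and inj: "inj_on \<sigma> V"
    using aut by (auto simp: graph_automorphism_def bij_betw_def)
  have inj_nbrs: "inj_on \<sigma> (nbrs V E x)" for x
    using inj_on_subset[OF inj nbrs_subset] .
  have fit: "fit r (\<sigma> ` S) (\<sigma> x) = fit r S x" if "x \<in> V" for x
    using fit_image[OF inj S that] .
  have "(\<Sum>w\<in>nbrs V E (\<sigma> v). fit r (\<sigma> ` S) w) = (\<Sum>w\<in>nbrs V E v. fit r (\<sigma> ` S) (\<sigma> w))"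
    unfolding nbrs_automorphism[OF aut \<open>v \<in> V\<close>] by (rule sum.reindex[OF inj_nbrs, unfolded comp_def])
  also have "\<dots> = (\<Sum>w\<in>nbrs V E v. fit r S w)"
    using nbrs_subset fit by (intro sum.cong refl) blast
  finally have sum_nbrs: "(\<Sum>w\<in>nbrs V E (\<sigma> v). fit r (\<sigma> ` S) w) = (\<Sum>w\<in>nbrs V E v. fit r S w)" .
  have "(\<Sum>w\<in>V. fit r (\<sigma> ` S) w) = (\<Sum>w\<in>V. fit r (\<sigma> ` S) (\<sigma> w))"
    by (rule sum.reindex_bij_betw[OF bij, symmetric])
  also have "\<dots> = (\<Sum>w\<in>V. fit r S w)"
    using fit by (intro sum.cong refl) blast
  finally have sum_all: "(\<Sum>w\<in>V. fit r (\<sigma> ` S) w) = (\<Sum>w\<in>V. fit r S w)" .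
  have "card (nbrs V E (\<sigma> u)) = card (nbrs V E u)"
    unfolding nbrs_automorphism[OF aut \<open>u \<in> V\<close>] using card_image[OF inj_nbrs] .
  then show ?thesis
    unfolding copy_prob_def sum_nbrs sum_all fit[OF \<open>u \<in> V\<close>] by simp
qed

lemma hitp_automorphism:
  assumes "finite V" "symp_on V E" and aut: "graph_automorphism V E \<sigma>"
    and "S \<subseteq> V"
  shows "hitp V E r d n (\<sigma> ` S) = hitp V E r d n S"
proof -
  have bij: "bij_betw \<sigma> V V" and inj: "inj_on \<sigma> V" and img: "\<sigma> ` V = V"
    using aut by (auto simp: graph_automorphism_def bij_betw_def)
  from \<open>S \<subseteq> V\<close> show ?thesis
  proof (induction n arbitrary: S)
    case 0
    have "\<sigma> ` S = V \<longleftrightarrow> \<sigma> ` S = \<sigma> ` V" using img by simp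
    also have "\<dots> \<longleftrightarrow> S = V" using inj_on_image_eq_iff[OF inj 0 subset_refl] .
    finally show ?case by simp
  next
    case (Suc n)
    let ?H = "hitp V E r d n"
    have "hitp V E r d (Suc n) (\<sigma> ` S) =
        (\<Sum>v\<in>V. \<Sum>u\<in>nbrs V E (\<sigma> v). copy_prob V E r d (\<sigma> ` S) (\<sigma> v) u * ?H (upd (\<sigma> ` S) (\<sigma> v) u))"
      unfolding hitp_Suc_copy_prob[OF assms(1,2)] by (rule sum.reindex_bij_betw[OF bij, symmetric])
    also have "\<dots> = (\<Sum>v\<in>V. \<Sum>u\<in>nbrs V E v.
        copy_prob V E r d (\<sigma> ` S) (\<sigma> v) (\<sigma> u) * ?H (upd (\<sigma> ` S) (\<sigma> v) (\<sigma> u)))"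
    proof (rule sum.cong[OF refl])
      fix v assume "v \<in> V"
      show "(\<Sum>u\<in>nbrs V E (\<sigma> v). copy_prob V E r d (\<sigma> ` S) (\<sigma> v) u * ?H (upd (\<sigma> ` S) (\<sigma> v) u))
          = (\<Sum>u\<in>nbrs V E v.
              copy_prob V E r d (\<sigma> ` S) (\<sigma> v) (\<sigma> u) * ?H (upd (\<sigma> ` S) (\<sigma> v) (\<sigma> u)))"
        unfolding nbrs_automorphism[OF aut \<open>v \<in> V\<close>]
        by (simp add: sum.reindex[OF inj_on_subset[OF inj nbrs_subset]])
    qed
    also have "\<dots> = (\<Sum>v\<in>V. \<Sum>u\<in>nbrs V E v. copy_prob V E r d S v u * ?H (upd S v u))"
    proof (intro sum.cong refl)
      fix v u assume "v \<in> V" "u \<in> nbrs V E v"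
      then have "u \<in> V" "upd S v u \<subseteq> V" using nbrs_subset Suc.prems by (auto simp: upd_def)
      then show "copy_prob V E r d (\<sigma> ` S) (\<sigma> v) (\<sigma> u) * ?H (upd (\<sigma> ` S) (\<sigma> v) (\<sigma> u))
          = copy_prob V E r d S v u * ?H (upd S v u)"
        using \<open>v \<in> V\<close> Suc
        by (simp add: copy_prob_automorphism[OF aut] upd_image[OF inj])
    qed
    also have "\<dots> = hitp V E r d (Suc n) S"
      unfolding hitp_Suc_copy_prob[OF assms(1,2)] ..
    finally show ?case .
  qed
qed

lemma upd_same_type: "(u \<in> S \<longleftrightarrow> v \<in> S) \<Longrightarrow> upd S v u = S"
  by (auto simp: upd_def)

lemma hitp_Suc_increment:
  assumes "finite V" "V \<noteq> {}" "symp_on V E" "\<And>v. v \<in> V \<Longrightarrow> nbrs V E v \<noteq> {}" "0 < r"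
  shows "hitp V E r d (Suc n) S = hitp V E r d n S
    + (\<Sum>v\<in>V. \<Sum>u\<in>nbrs V E v. copy_prob V E r d S v u * (hitp V E r d n (upd S v u) - hitp V E r d n S))"
proof -
  let ?H = "hitp V E r d n"
  have "(\<Sum>v\<in>V. \<Sum>u\<in>nbrs V E v. copy_prob V E r d S v u * (?H (upd S v u) - ?H S))
      = (\<Sum>v\<in>V. \<Sum>u\<in>nbrs V E v. copy_prob V E r d S v u * ?H (upd S v u))
        - ?H S * (\<Sum>v\<in>V. \<Sum>u\<in>nbrs V E v. copy_prob V E r d S v u)"
    by (simp add: right_diff_distrib sum_subtractf sum_distrib_left mult.commute)
  then show ?thesis
    using copy_prob_sum[OF assms, of d S] hitp_Suc_copy_prob[OF assms(1,3), of r d n S] by simp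
qed

lemma hitp_absorbing:
  assumes "finite V" "V \<noteq> {}" "symp_on V E" "\<And>v. v \<in> V \<Longrightarrow> nbrs V E v \<noteq> {}" "0 < r"
  shows "hitp V E r d n {} = 0" "hitp V E r d n V = 1"
proof -
  have "hitp V E r d (Suc n) S = hitp V E r d n S" if "S = {} \<or> S = V" for n S
    using that nbrs_subset
    by (subst hitp_Suc_increment[OF assms]) (auto intro!: sum.neutral simp: upd_same_type subset_iff)
  then show "hitp V E r d n {} = 0" "hitp V E r d n V = 1"
    using assms(2) by (induction n) auto
qed

section \<open>The cycle\<close>

definition cyc_rot :: "nat \<Rightarrow> nat \<Rightarrow> nat \<Rightarrow> nat" where
  "cyc_rot N c v = (v + c) mod N"

lemma cyc_rot_lt: "0 < N \<Longrightarrow> cyc_rot N c v < N"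
  by (simp add: cyc_rot_def)

lemma cyc_rot_cyc_rot: "cyc_rot N a (cyc_rot N b v) = cyc_rot N (b + a) v"
  by (simp add: cyc_rot_def mod_add_left_eq add.assoc)

lemma cyc_rot_period: "a mod N = 0 \<Longrightarrow> v < N \<Longrightarrow> cyc_rot N a v = v"
  by (metis add.right_neutral cyc_rot_def mod_add_right_eq mod_less)

lemma cyc_rot_inverse:
  assumes "0 < N" "v < N"
  shows "cyc_rot N (N - c mod N) (cyc_rot N c v) = v" "cyc_rot N c (cyc_rot N (N - c mod N) v) = v"
proof -
  have "(c + (N - c mod N)) mod N = (c mod N + (N - c mod N)) mod N"
    by (simp add: mod_add_left_eq)
  also have "\<dots> = 0"
    using mod_less_divisor[OF assms(1), of c] by simp
  finally have "(c + (N - c mod N)) mod N = 0" "(N - c mod N + c) mod N = 0"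
    by (simp_all add: add.commute)
  then show "cyc_rot N (N - c mod N) (cyc_rot N c v) = v" "cyc_rot N c (cyc_rot N (N - c mod N) v) = v"
    using assms(2) by (simp_all add: cyc_rot_cyc_rot cyc_rot_period)
qed

lemma bij_cyc_rot: "0 < N \<Longrightarrow> bij_betw (cyc_rot N c) {0..<N} {0..<N}"
  by (rule bij_betw_byWitness[where f' = "cyc_rot N (N - c mod N)"])
    (auto simp: cyc_rot_inverse cyc_rot_lt image_subset_iff)

definition cyc_succ :: "nat \<Rightarrow> nat \<Rightarrow> nat" where
  "cyc_succ N = cyc_rot N 1"

definition cyc_pred :: "nat \<Rightarrow> nat \<Rightarrow> nat" where
  "cyc_pred N = cyc_rot N (N - 1)"

lemma cyc_succ_lt: "0 < N \<Longrightarrow> cyc_succ N v < N"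
  by (simp add: cyc_succ_def cyc_rot_lt)

lemma cyc_succ_eq: "v < N \<Longrightarrow> cyc_succ N v = (if v + 1 = N then 0 else v + 1)"
  by (simp add: cyc_succ_def cyc_rot_def)

lemma cyc_pred_eq: "v < N \<Longrightarrow> cyc_pred N v = (if v = 0 then N - 1 else v - 1)"
proof (cases v)
  case (Suc w)
  moreover assume "v < N"
  ultimately have "v + (N - 1) = w + N" by simp
  with \<open>v < N\<close> Suc show ?thesis by (simp add: cyc_pred_def cyc_rot_def)
qed (simp add: cyc_pred_def cyc_rot_def)

lemma cyc_pred_succ: "v < N \<Longrightarrow> cyc_pred N (cyc_succ N v) = v"
  by (simp add: cyc_pred_def cyc_succ_def cyc_rot_cyc_rot cyc_rot_period)

lemma cyc_succ_pred: "v < N \<Longrightarrow> cyc_succ N (cyc_pred N v) = v"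
  by (simp add: cyc_pred_def cyc_succ_def cyc_rot_cyc_rot cyc_rot_period)

lemma cyc_succ_cyc_rot: "cyc_succ N (cyc_rot N c v) = cyc_rot N c (cyc_succ N v)"
  by (simp add: cyc_succ_def cyc_rot_cyc_rot add.commute)

lemma cycle_adj_cyc_succ: "cycle_adj N u v \<longleftrightarrow> v = cyc_succ N u \<or> u = cyc_succ N v"
  by (simp add: cycle_adj_def cyc_succ_def cyc_rot_def)

lemma symp_cycle_adj: "symp_on V (cycle_adj N)"
  by (auto simp: symp_on_def cycle_adj_def)

lemma cycle_automorphism_cyc_rot:
  assumes "0 < N"
  shows "graph_automorphism {0..<N} (cycle_adj N) (cyc_rot N c)"
proof -
  have inj: "inj_on (cyc_rot N c) {0..<N}"
    using bij_cyc_rot[OF assms] by (rule bij_betw_imp_inj_on)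
  have "cyc_rot N c v = cyc_succ N (cyc_rot N c u) \<longleftrightarrow> v = cyc_succ N u"
    if "u < N" "v < N" for u v
    unfolding cyc_succ_cyc_rot using that inj_on_eq_iff[OF inj] cyc_succ_lt[OF assms] by simp
  then show ?thesis
    using bij_cyc_rot[OF assms] by (auto simp: graph_automorphism_def cycle_adj_cyc_succ)
qed

lemma nbrs_cycle:
  assumes "0 < N" "v < N"
  shows "nbrs {0..<N} (cycle_adj N) v = {cyc_succ N v, cyc_pred N v}"
proof -
  have "v = cyc_succ N u \<longleftrightarrow> u = cyc_pred N v" if "u < N" for u
    using that assms cyc_pred_succ cyc_succ_pred by auto
  then show ?thesis
    using assms by (auto simp: nbrs_def cycle_adj_cyc_succ cyc_succ_lt cyc_pred_def cyc_rot_lt)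
qed

lemma cyc_succ_ne_pred:
  assumes "3 \<le> N" "v < N"
  shows "cyc_succ N v \<noteq> cyc_pred N v"
  using assms by (auto simp: cyc_succ_eq cyc_pred_eq)

lemma card_nbrs_cycle: "3 \<le> N \<Longrightarrow> v < N \<Longrightarrow> card (nbrs {0..<N} (cycle_adj N) v) = 2"
  by (simp add: nbrs_cycle cyc_succ_ne_pred)

lemma sum_nbrs_cycle:
  assumes "3 \<le> N"
  shows "(\<Sum>v\<in>{0..<N}. \<Sum>u\<in>nbrs {0..<N} (cycle_adj N) v. f v u)
    = (\<Sum>v\<in>{0..<N}. f v (cyc_succ N v) + f (cyc_succ N v) v)"
proof -
  have "bij_betw (cyc_succ N) {0..<N} {0..<N}" using assms by (simp add: cyc_succ_def bij_cyc_rot)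
  then have "(\<Sum>v\<in>{0..<N}. f v (cyc_pred N v))
      = (\<Sum>v\<in>{0..<N}. f (cyc_succ N v) (cyc_pred N (cyc_succ N v)))"
    by (rule sum.reindex_bij_betw[symmetric])
  also have "\<dots> = (\<Sum>v\<in>{0..<N}. f (cyc_succ N v) v)"
    by (simp add: cyc_pred_succ)
  moreover have "(\<Sum>u\<in>nbrs {0..<N} (cycle_adj N) v. f v u) = f v (cyc_succ N v) + f v (cyc_pred N v)"
    if "v < N" for v
    using that assms by (simp add: nbrs_cycle cyc_succ_ne_pred)
  ultimately show ?thesis
    by (simp add: sum.distrib)
qed

lemma copy_prob_cycle:
  assumes "3 \<le> N" "v < N" "u < N"
  shows "copy_prob {0..<N} (cycle_adj N) r d S v u
    = d / real N * (fit r S u / (fit r S (cyc_succ N v) + fit r S (cyc_pred N v)))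
      + (1 - d) * (fit r S u / (\<Sum>w\<in>{0..<N}. fit r S w)) / 2"
  using assms by (simp add: copy_prob_def nbrs_cycle cyc_succ_ne_pred card_nbrs_cycle)

section \<open>Arcs of mutants\<close>

lemma arc_insert_last:
  assumes "k < N"
  shows "insert (N - 1) {0..<k} = cyc_pred N ` {0..<k + 1}"
proof -
  have "cyc_pred N ` {0..<k + 1} = insert (cyc_pred N 0) (cyc_pred N ` Suc ` {0..<k})"
    by (simp add: atLeast0_lessThan_Suc_eq_insert_0)
  also have "cyc_pred N ` Suc ` {0..<k} = {0..<k}"
    using assms by (force simp: image_image cyc_pred_eq)
  finally show ?thesis
    using assms by (simp add: cyc_pred_eq)
qed

lemma arc_remove_first:
  assumes "0 < k" "k \<le> N"
  shows "{0..<k} - {0} = cyc_succ N ` {0..<k - 1}"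
proof -
  have "cyc_succ N ` {0..<k - 1} = Suc ` {0..<k - 1}"
    using assms by (intro image_cong refl) (simp add: cyc_succ_eq)
  also have "\<dots> = {1..<k}"
    using assms by (simp add: image_Suc_atLeastLessThan)
  finally show ?thesis by auto
qed

lemma sum_fit_arc:
  assumes "k \<le> N"
  shows "(\<Sum>w\<in>{0..<N}. fit r {0..<k} w) = Fk N r k"
proof -
  have "(\<Sum>w\<in>{0..<N}. fit r {0..<k} w)
      = (\<Sum>w\<in>{0..<k}. fit r {0..<k} w) + (\<Sum>w\<in>{k..<N}. fit r {0..<k} w)"
    using assms by (simp add: sum.atLeastLessThan_concat)
  also have "\<dots> = r * real k + (real N - real k)"
    using assms by (simp add: fit_def of_nat_diff)
  finally show ?thesis by (simp add: Fk_def)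
qed

definition arc_grow_prob :: "nat \<Rightarrow> real \<Rightarrow> real \<Rightarrow> nat \<Rightarrow> real" where
  "arc_grow_prob N r d k = (1 - d) * r / Fk N r k
     + (if k = N - 1 then d / real N else 2 * r * d / ((1 + r) * real N))"

definition arc_shrink_prob :: "nat \<Rightarrow> real \<Rightarrow> real \<Rightarrow> nat \<Rightarrow> real" where
  "arc_shrink_prob N r d k = (1 - d) / Fk N r k
     + (if k = 1 then d / real N else 2 * d / ((1 + r) * real N))"

lemma gamma_eq_arc_shrink_div_grow:
  assumes "3 \<le> N"
  shows "gamma N r d k = arc_shrink_prob N r d k / arc_grow_prob N r d k"
proof -
  have "\<not> (k = 1 \<and> k = N - 1)" using assms by auto
  then show ?thesis by (auto simp: gamma_def arc_grow_prob_def arc_shrink_prob_def)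
qed

lemma copy_prob_arc:
  assumes "3 \<le> N" "k \<le> N" "v < N" "u < N"
  shows "copy_prob {0..<N} (cycle_adj N) r d {0..<k} v u
    = d / real N * (fit r {0..<k} u / (fit r {0..<k} (cyc_succ N v) + fit r {0..<k} (cyc_pred N v)))
      + (1 - d) * (fit r {0..<k} u / Fk N r k) / 2"
  unfolding copy_prob_cycle[OF assms(1,3,4)] sum_fit_arc[OF assms(2)] ..

lemma copy_prob_arc_grow:
  assumes "3 \<le> N" "0 < r" "0 < k" "k < N"
  shows "copy_prob {0..<N} (cycle_adj N) r d {0..<k} k (k - 1)
    + copy_prob {0..<N} (cycle_adj N) r d {0..<k} (N - 1) 0 = arc_grow_prob N r d k"
proof -
  define a where "a = (if k = N - 1 then r else 1)"
  have "copy_prob {0..<N} (cycle_adj N) r d {0..<k} k (k - 1)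
      = d / real N * (r / (a + r)) + (1 - d) * (r / Fk N r k) / 2"
    using assms by (auto simp: copy_prob_arc cyc_succ_eq cyc_pred_eq fit_def a_def)
  moreover have "copy_prob {0..<N} (cycle_adj N) r d {0..<k} (N - 1) 0
      = d / real N * (r / (r + a)) + (1 - d) * (r / Fk N r k) / 2"
    using assms by (auto simp: copy_prob_arc cyc_succ_eq cyc_pred_eq fit_def a_def)
  ultimately show ?thesis
    using assms by (auto simp: arc_grow_prob_def a_def field_simps)
qed

lemma copy_prob_arc_shrink:
  assumes "3 \<le> N" "0 < r" "0 < k" "k < N"
  shows "copy_prob {0..<N} (cycle_adj N) r d {0..<k} (k - 1) k
    + copy_prob {0..<N} (cycle_adj N) r d {0..<k} 0 (N - 1) = arc_shrink_prob N r d k"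
proof -
  define b where "b = (if k = 1 then 1 else r)"
  have "copy_prob {0..<N} (cycle_adj N) r d {0..<k} (k - 1) k
      = d / real N * (1 / (1 + b)) + (1 - d) * (1 / Fk N r k) / 2"
    using assms by (auto simp: copy_prob_arc cyc_succ_eq cyc_pred_eq fit_def b_def)
  moreover have "copy_prob {0..<N} (cycle_adj N) r d {0..<k} 0 (N - 1)
      = d / real N * (1 / (b + 1)) + (1 - d) * (1 / Fk N r k) / 2"
    using assms by (auto simp: copy_prob_arc cyc_succ_eq cyc_pred_eq fit_def b_def)
  ultimately show ?thesis
    using assms by (auto simp: arc_shrink_prob_def b_def field_simps)
qed

lemma cycle_graph:
  assumes "3 \<le> N"
  shows "finite {0..<N}" "{0..<N} \<noteq> {}" "symp_on {0..<N} (cycle_adj N)"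
    "\<And>v. v \<in> {0..<N} \<Longrightarrow> nbrs {0..<N} (cycle_adj N) v \<noteq> {}"
  using assms by (auto simp: nbrs_cycle symp_cycle_adj)

lemma hitp_cyc_rot:
  assumes "3 \<le> N" "S \<subseteq> {0..<N}"
  shows "hitp {0..<N} (cycle_adj N) r d n (cyc_rot N c ` S) = hitp {0..<N} (cycle_adj N) r d n S"
  using assms cycle_automorphism_cyc_rot[of N c]
  by (intro hitp_automorphism cycle_graph) auto

lemma hitp_arc_Suc:
  assumes N3: "3 \<le> N" and r: "0 < r" and k: "0 < k" "k < N"
  shows "hitp {0..<N} (cycle_adj N) r d (Suc n) {0..<k}
    = arc_grow_prob N r d k * hitp {0..<N} (cycle_adj N) r d n {0..<k + 1}
      + arc_shrink_prob N r d k * hitp {0..<N} (cycle_adj N) r d n {0..<k - 1}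
      + (1 - arc_grow_prob N r d k - arc_shrink_prob N r d k)
        * hitp {0..<N} (cycle_adj N) r d n {0..<k}"
proof -
  let ?V = "{0..<N}" and ?E = "cycle_adj N" and ?S = "{0..<k}"
  let ?cp = "copy_prob ?V ?E r d ?S" and ?H = "hitp ?V ?E r d n"
  define g where "g v u = ?cp v u * (?H (upd ?S v u) - ?H ?S)" for v u
  define e where "e v = g v (cyc_succ N v) + g (cyc_succ N v) v" for v
  have up: "?H (insert (N - 1) ?S) = ?H {0..<k + 1}"
    using hitp_cyc_rot[OF N3, of "{0..<k + 1}"] k arc_insert_last[OF \<open>k < N\<close>]
    by (simp add: cyc_pred_def)
  have "{0..<k - 1} \<subseteq> ?V" using k by auto
  from hitp_cyc_rot[OF N3 this, of r d n 1]
  have down: "?H (?S - {0}) = ?H {0..<k - 1}"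
    using k arc_remove_first[of k N] by (simp add: cyc_succ_def)
  have "hitp ?V ?E r d (Suc n) ?S = ?H ?S + sum e ?V"
    using hitp_Suc_increment[OF cycle_graph[OF N3] r, of d n ?S]
    unfolding sum_nbrs_cycle[OF N3] e_def g_def .
  \<comment> \<open>Only the edges at the two ends of the arc join vertices of different type.\<close>
  also have "sum e ?V = sum e {k - 1, N - 1}"
  proof (rule sum.mono_neutral_right)
    show "\<forall>v\<in>?V - {k - 1, N - 1}. e v = 0"
    proof
      fix v assume v: "v \<in> ?V - {k - 1, N - 1}"
      then have "cyc_succ N v = v + 1" by (auto simp: cyc_succ_eq)
      moreover have "v + 1 \<in> ?S \<longleftrightarrow> v \<in> ?S" using v by auto
      ultimately show "e v = 0" by (simp add: e_def g_def upd_same_type)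
    qed
  qed (use k in auto)
  also have "\<dots> = e (k - 1) + e (N - 1)"
    using k by simp
  also have "e (k - 1)
      = ?cp k (k - 1) * (?H {0..<k + 1} - ?H ?S) + ?cp (k - 1) k * (?H {0..<k - 1} - ?H ?S)"
  proof -
    have "insert k ?S = {0..<k + 1}" "?S - {k - 1} = {0..<k - 1}" using k by auto
    then show ?thesis
      using k by (simp add: e_def g_def cyc_succ_eq upd_def add.commute)
  qed
  also have "e (N - 1)
      = ?cp (N - 1) 0 * (?H {0..<k + 1} - ?H ?S) + ?cp 0 (N - 1) * (?H {0..<k - 1} - ?H ?S)"
  proof -
    have "cyc_succ N (N - 1) = 0" using k by (simp add: cyc_succ_eq)
    moreover have "upd ?S (N - 1) 0 = insert (N - 1) ?S" "upd ?S 0 (N - 1) = ?S - {0}"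
      using k by (auto simp: upd_def)
    ultimately show ?thesis using up down by (simp add: e_def g_def)
  qed
  finally have "hitp ?V ?E r d (Suc n) ?S = ?H ?S
      + (?cp k (k - 1) + ?cp (N - 1) 0) * (?H {0..<k + 1} - ?H ?S)
      + (?cp (k - 1) k + ?cp 0 (N - 1)) * (?H {0..<k - 1} - ?H ?S)"
    by (simp add: algebra_simps)
  then show ?thesis
    unfolding copy_prob_arc_grow[OF N3 r k] copy_prob_arc_shrink[OF N3 r k]
    by (simp add: algebra_simps)
qed

lemma arc_grow_shrink_prob_bounds:
  assumes N3: "3 \<le> N" and r: "0 < r" and d: "0 \<le> d" "d \<le> 1" and k: "0 < k" "k < N"
  shows "0 < arc_grow_prob N r d k \<and> 0 \<le> arc_shrink_prob N r d k
    \<and> arc_grow_prob N r d k + arc_shrink_prob N r d k \<le> 1"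
proof -
  let ?cp = "copy_prob {0..<N} (cycle_adj N) r d {0..<k}"
  define e where "e v = ?cp v (cyc_succ N v) + ?cp (cyc_succ N v) v" for v
  have pos_succ: "0 < ?cp v (cyc_succ N v)" and pos_pred: "0 < ?cp v (cyc_pred N v)"
    if "v < N" for v
    using that N3 copy_prob_pos[OF cycle_graph(1,3)[OF N3] r d, of v]
    by (simp_all add: nbrs_cycle)
  have e_nonneg: "0 \<le> e v" if "v < N" for v
    using pos_succ[OF that] pos_pred[of "cyc_succ N v"] that N3
    by (simp add: e_def cyc_pred_succ cyc_succ_lt less_imp_le add_nonneg_nonneg)
  have up: "arc_grow_prob N r d k = ?cp k (cyc_pred N k) + ?cp (N - 1) (cyc_succ N (N - 1))"
    using copy_prob_arc_grow[OF N3 r k] k by (simp add: cyc_succ_eq cyc_pred_eq)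
  have down: "arc_shrink_prob N r d k = ?cp (k - 1) (cyc_succ N (k - 1)) + ?cp 0 (cyc_pred N 0)"
    using copy_prob_arc_shrink[OF N3 r k] k by (simp add: cyc_succ_eq cyc_pred_eq)
  have "arc_grow_prob N r d k + arc_shrink_prob N r d k = sum e {k - 1, N - 1}"
    unfolding copy_prob_arc_grow[OF N3 r k, where d = d, symmetric]
      copy_prob_arc_shrink[OF N3 r k, where d = d, symmetric]
    using k by (simp add: e_def cyc_succ_eq)
  also have "\<dots> \<le> sum e {0..<N}"
    using k e_nonneg by (intro sum_mono2) auto
  also have "\<dots> = 1"
    using copy_prob_sum[OF cycle_graph[OF N3] r, of d "{0..<k}"]
    unfolding sum_nbrs_cycle[OF N3] e_def .
  finally show ?thesis
    using up down pos_succ pos_pred k by (simp add: add_pos_pos less_imp_le)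
qed

lemma hitp_arc_eq_bd_absorb:
  assumes N3: "3 \<le> N" and r: "0 < r" and "k \<le> N"
  shows "hitp {0..<N} (cycle_adj N) r d n {0..<k}
    = bd_absorb (arc_grow_prob N r d) (arc_shrink_prob N r d) N n k"
  using \<open>k \<le> N\<close>
proof (induction n arbitrary: k)
  case 0
  then show ?case by auto
next
  case (Suc n)
  consider "k = 0" | "k = N" | "0 < k" "k < N" using Suc.prems by linarith
  then show ?case
  proof cases
    case 3
    then show ?thesis
      using Suc.IH[of "k + 1"] Suc.IH[of "k - 1"] Suc.IH[of k]
      by (simp add: hitp_arc_Suc[OF N3 r] bd_absorb_Suc_interior)
  qed (use hitp_absorbing[OF cycle_graph[OF N3] r] N3 in simp_all)
qed

lemma hitp_singleton_eq_bd_absorb: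
  assumes "3 \<le> N" "0 < r" "u < N"
  shows "hitp {0..<N} (cycle_adj N) r d n {u}
    = bd_absorb (arc_grow_prob N r d) (arc_shrink_prob N r d) N n 1"
proof -
  have "{u} = cyc_rot N u ` {0..<1}" using assms(3) by (simp add: cyc_rot_def)
  then have "hitp {0..<N} (cycle_adj N) r d n {u}
      = hitp {0..<N} (cycle_adj N) r d n (cyc_rot N u ` {0..<1})"
    by (rule arg_cong)
  also have "\<dots> = hitp {0..<N} (cycle_adj N) r d n {0..<1}"
    using assms(1) by (intro hitp_cyc_rot) auto
  also have "\<dots> = bd_absorb (arc_grow_prob N r d) (arc_shrink_prob N r d) N n 1"
    using assms by (intro hitp_arc_eq_bd_absorb) auto
  finally show ?thesis .
qed

theorem mainTheorem5:
  fixes N :: nat and r d :: real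
  assumes "N \<ge> 3" and "r > 0" and "0 \<le> d" and "d \<le> 1"
  shows "fp {0..<N} (cycle_adj N) r d
           = 1 / (1 + (\<Sum>j = 1..N - 1. \<Prod>k = 1..j. gamma N r d k))"
proof -
  let ?fp = "1 / (1 + (\<Sum>j = 1..N - 1. \<Prod>k = 1..j. gamma N r d k))"
  have "(\<lambda>n. bd_absorb (arc_grow_prob N r d) (arc_shrink_prob N r d) N n 1) \<longlonglongrightarrow> ?fp"
    using bd_absorb_tendsto[of N "arc_grow_prob N r d" "arc_shrink_prob N r d"]
      arc_grow_shrink_prob_bounds[OF assms] assms(1)
    by (simp add: gamma_eq_arc_shrink_div_grow)
  then have "fp_from {0..<N} (cycle_adj N) r d {u} = ?fp" if "u < N" for u
    using hitp_singleton_eq_bd_absorb[OF assms(1,2) that] by (simp add: fp_from_def limI)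
  then show ?thesis
    using assms(1) by (simp add: fp_def)
qed

end
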